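(* Let $\{F_n\}_{n\geq 0}$ be a sequence of positive integers with $F_0=1$, let $\Pi$ be the cobweb poset it determines, and for $n\ge 0$ let $\chi_n(t)=\sum_{x\in P_n}\mu(0,x)\,t^{n-r(x)}$ be the characteristic polynomial of the finite cobweb subposet $P_n$. Then $$\chi_0(t)=1,\qquad \chi_1(t)=t-F_1,$$ and for $n\geq 2$, $$\chi_n(t)=t\,\chi_{n-1}(t)+(-1)^nF_n(F_{n-1}-1)(F_{n-2}-1)\cdots(F_1-1).$$
   Context: Cobweb poset: given the sequence $\{F_n\}_{n\ge 0}$, for $s\geq 0$ let the $s$-th level be $\Phi_s=\{\langle j,s\rangle : 1\leq j\leq F_s\}$, and let $V=\bigcup_{s\geq 0}\Phi_s$. The cobweb poset is $\Pi=(V,\leq)$ where for $x=\langle s,t\rangle$, $y=\langle u,v\rangle$ one has $x\leq y$ iff ($t<v$) or ($t=v$ and $s=u$). Its rank function is $r(x)=s$ for $x\in\Phi_s$. For $n\geq 0$, $P_n$ is the set $\bigcup_{0\leq s\leq n}\Phi_s$ with the induced order; it has unique minimal element $0=\langle 1,0\rangle$. $\mu$ denotes the M\"obius function of $P_n$. *)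

theory Defs
  imports "HOL-Computational_Algebra.Polynomial"
begin

text \<open>The recursion is made total by a fuel argument; fuel card P suffices since every
  strict chain in P has fewer than card P steps.\<close>

fun mob_aux :: "nat \<Rightarrow> 'a set \<Rightarrow> ('a \<Rightarrow> 'a \<Rightarrow> bool) \<Rightarrow> 'a \<Rightarrow> 'a \<Rightarrow> int" where
  "mob_aux 0 P le x y = 0"
| "mob_aux (Suc k) P le x y =
     (if x = y then 1
      else if le x y then - (\<Sum>z\<in>{z\<in>P. le x z \<and> le z y \<and> z \<noteq> y}. mob_aux k P le x z)
      else 0)"

definition mobius :: "'a set \<Rightarrow> ('a \<Rightarrow> 'a \<Rightarrow> bool) \<Rightarrow> 'a \<Rightarrow> 'a \<Rightarrow> int" where
  "mobius P le x y = mob_aux (card P) P le x y"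

text \<open>Cobweb poset: vertex (j, s) is the j-th element of level s, 1 <= j <= F s.\<close>

definition cobweb_le :: "nat \<times> nat \<Rightarrow> nat \<times> nat \<Rightarrow> bool" where
  "cobweb_le x y \<longleftrightarrow> snd x < snd y \<or> (snd x = snd y \<and> fst x = fst y)"

definition cobweb_rank :: "nat \<times> nat \<Rightarrow> nat" where
  "cobweb_rank x = snd x"

definition cobweb_P :: "(nat \<Rightarrow> nat) \<Rightarrow> nat \<Rightarrow> (nat \<times> nat) set" where
  "cobweb_P F n = {(j, s). s \<le> n \<and> 1 \<le> j \<and> j \<le> F s}"

definition cobweb_char_poly :: "(nat \<Rightarrow> nat) \<Rightarrow> nat \<Rightarrow> int poly" where
  "cobweb_char_poly F n =
     (\<Sum>x\<in>cobweb_P F n. smult (mobius (cobweb_P F n) cobweb_le (1, 0) x) (monom 1 (n - cobweb_rank x)))"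

end

theory Submission
  imports Defs
begin

text \<open>For x of rank s + 1 the interval [0, x) is the whole subposet P_s, so by induction
  \<mu>(0, x) depends only on the rank of x. Writing \<mu>_s for this value, the defining recursion
  reads \<mu>_(s+1) = - \<Sum>_(t\<le>s) F_t \<mu>_t, which telescopes to \<mu>_(s+1) = - \<Prod>_(t=1..s) (1 - F_t).
  Hence \<chi>_n(t) = \<Sum>_(s\<le>n) F_s \<mu>_s t^(n-s), and splitting off the summand s = n gives the
  recursion.\<close>

lemma cobweb_P_0: "cobweb_P F 0 = (\<lambda>j. (j, 0)) ` {1..F 0}"
  unfolding cobweb_P_def by auto

lemma cobweb_P_Suc: "cobweb_P F (Suc s) = cobweb_P F s \<union> (\<lambda>j. (j, Suc s)) ` {1..F (Suc s)}"
  unfolding cobweb_P_def by (auto simp: le_Suc_eq)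

lemma finite_cobweb_P: "finite (cobweb_P F s)"
  by (induction s) (auto simp: cobweb_P_0 cobweb_P_Suc)

lemma cobweb_P_rank_le: "s \<le> n \<Longrightarrow> {z \<in> cobweb_P F n. snd z \<le> s} = cobweb_P F s"
  unfolding cobweb_P_def by auto

lemma sum_cobweb_P_by_level:
  fixes g :: "nat \<Rightarrow> 'b::comm_semiring_1"
  shows "(\<Sum>z\<in>cobweb_P F s. g (snd z)) = (\<Sum>t\<le>s. of_nat (F t) * g t)"
proof (induction s)
  case 0
  show ?case by (simp add: cobweb_P_0 sum.reindex inj_on_def)
next
  case (Suc s)
  have "cobweb_P F s \<inter> (\<lambda>j. (j, Suc s)) ` {1..F (Suc s)} = {}"
    unfolding cobweb_P_def by auto
  then have "(\<Sum>z\<in>cobweb_P F (Suc s). g (snd z)) =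
      (\<Sum>z\<in>cobweb_P F s. g (snd z)) + (\<Sum>z\<in>(\<lambda>j. (j, Suc s)) ` {1..F (Suc s)}. g (snd z))"
    unfolding cobweb_P_Suc by (intro sum.union_disjoint) (auto simp: finite_cobweb_P)
  also have "(\<Sum>z\<in>(\<lambda>j. (j, Suc s)) ` {1..F (Suc s)}. g (snd z)) = of_nat (F (Suc s)) * g (Suc s)"
    by (simp add: sum.reindex inj_on_def)
  finally show ?case using Suc by simp
qed

lemma card_cobweb_P_ge:
  assumes "\<And>k. F k > 0"
  shows "n + 1 \<le> card (cobweb_P F n)"
proof -
  have "card (cobweb_P F n) = (\<Sum>z\<in>cobweb_P F n. (\<lambda>_. 1::nat) (snd z))"
    by simp
  also have "\<dots> = (\<Sum>t\<le>n. F t)"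
    using sum_cobweb_P_by_level[of "\<lambda>_. 1::nat" F n] by simp
  also have "\<dots> \<ge> (\<Sum>t\<le>n. 1)"
    by (rule sum_mono) (use assms in \<open>auto simp: Suc_le_eq\<close>)
  finally show ?thesis by simp
qed

fun cobweb_mu :: "(nat \<Rightarrow> nat) \<Rightarrow> nat \<Rightarrow> int" where
  "cobweb_mu F 0 = 1"
| "cobweb_mu F (Suc s) = - (\<Prod>t=1..s. 1 - int (F t))"

lemma sum_level_cobweb_mu:
  assumes "F 0 = 1"
  shows "(\<Sum>t\<le>s. int (F t) * cobweb_mu F t) = (\<Prod>t=1..s. 1 - int (F t))"
  by (induction s) (simp_all add: assms prod.cl_ivl_Suc algebra_simps)

lemma mob_aux_cobweb:
  assumes "F 0 = 1" and "y \<in> cobweb_P F n" and "snd y < k"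
  shows "mob_aux k (cobweb_P F n) cobweb_le (1, 0) y = cobweb_mu F (snd y)"
  using assms(2,3)
proof (induction k arbitrary: y)
  case 0
  then show ?case by simp
next
  case (Suc k)
  show ?case
  proof (cases "snd y")
    case 0
    with Suc.prems assms(1) have "y = (1, 0)"
      unfolding cobweb_P_def by (cases y) auto
    then show ?thesis by simp
  next
    case (Suc s)
    have "s < n"
      using Suc.prems \<open>snd y = Suc s\<close> unfolding cobweb_P_def by auto
    have below_y: "{z \<in> cobweb_P F n. cobweb_le (1, 0) z \<and> cobweb_le z y \<and> z \<noteq> y}
        = {z \<in> cobweb_P F n. snd z \<le> s}"
      using Suc assms(1) unfolding cobweb_le_def cobweb_P_def by (cases y) auto
    have "(\<Sum>z\<in>{z \<in> cobweb_P F n. snd z \<le> s}. mob_aux k (cobweb_P F n) cobweb_le (1, 0) z)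
        = (\<Sum>z\<in>{z \<in> cobweb_P F n. snd z \<le> s}. cobweb_mu F (snd z))"
      using Suc.IH Suc.prems \<open>snd y = Suc s\<close> by (auto intro!: sum.cong)
    also have "\<dots> = (\<Sum>z\<in>cobweb_P F s. cobweb_mu F (snd z))"
      using \<open>s < n\<close> by (simp add: cobweb_P_rank_le)
    also have "\<dots> = (\<Prod>t=1..s. 1 - int (F t))"
      by (simp add: sum_cobweb_P_by_level sum_level_cobweb_mu assms(1))
    moreover have "y \<noteq> (1, 0)" and "cobweb_le (1, 0) y"
      using \<open>snd y = Suc s\<close> by (auto simp: cobweb_le_def)
    ultimately show ?thesis
      using below_y \<open>snd y = Suc s\<close> by simp
  qed
qed

lemma mobius_cobweb:
  assumes "\<And>k. F k > 0" and "F 0 = 1" and "x \<in> cobweb_P F n"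
  shows "mobius (cobweb_P F n) cobweb_le (1, 0) x = cobweb_mu F (snd x)"
proof -
  have "snd x \<le> n"
    using assms(3) unfolding cobweb_P_def by auto
  then have "snd x < card (cobweb_P F n)"
    using card_cobweb_P_ge[of F n] assms(1) by simp
  then show ?thesis
    unfolding mobius_def using mob_aux_cobweb[OF assms(2,3)] by simp
qed

lemma cobweb_char_poly_by_level:
  assumes "\<And>k. F k > 0" and "F 0 = 1"
  shows "cobweb_char_poly F n = (\<Sum>t\<le>n. monom (int (F t) * cobweb_mu F t) (n - t))"
proof -
  have "cobweb_char_poly F n = (\<Sum>x\<in>cobweb_P F n. (\<lambda>t. smult (cobweb_mu F t) (monom 1 (n - t))) (snd x))"
    unfolding cobweb_char_poly_def cobweb_rank_def
    by (intro sum.cong refl) (use mobius_cobweb[of F, OF assms] in simp)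
  also have "\<dots> = (\<Sum>t\<le>n. monom (int (F t) * cobweb_mu F t) (n - t))"
    by (subst sum_cobweb_P_by_level) (simp add: of_nat_poly smult_monom)
  finally show ?thesis .
qed

lemma sum_monom_diff_Suc:
  fixes c :: "nat \<Rightarrow> 'a::comm_ring_1"
  shows "(\<Sum>t\<le>Suc n. monom (c t) (Suc n - t)) = [:0, 1:] * (\<Sum>t\<le>n. monom (c t) (n - t)) + [:c (Suc n):]"
proof -
  have "(\<Sum>t\<le>n. monom (c t) (Suc n - t)) = [:0, 1:] * (\<Sum>t\<le>n. monom (c t) (n - t))"
    unfolding sum_distrib_left
    by (intro sum.cong) (simp_all add: Suc_diff_le monom_Suc)
  then show ?thesis
    by (simp add: monom_0)
qed

lemma prod_one_minus: "(\<Prod>t=1..s. 1 - int (F t)) = (-1) ^ s * (\<Prod>t=1..s. int (F t) - 1)"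
  by (induction s) (simp_all add: prod.cl_ivl_Suc algebra_simps)

theorem mainTheorem4:
  fixes F :: "nat \<Rightarrow> nat"
  assumes "\<And>k. F k > 0" and "F 0 = 1"
  shows "cobweb_char_poly F 0 = 1
    \<and> cobweb_char_poly F 1 = [:- int (F 1), 1:]
    \<and> (\<forall>n\<ge>2. cobweb_char_poly F n =
           [:0, 1:] * cobweb_char_poly F (n - 1)
           + [: (-1) ^ n * int (F n) * (\<Prod>k=1..n-1. int (F k) - 1) :])"
proof (intro conjI allI impI)
  note by_level = cobweb_char_poly_by_level[of F, OF assms]
  show "cobweb_char_poly F 0 = 1"
    using assms(2) by (simp add: by_level)
  show "cobweb_char_poly F 1 = [:- int (F 1), 1:]"
    using assms(2) by (simp add: by_level monom_altdef)
  fix n :: nat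
  assume "n \<ge> 2"
  then obtain m where n: "n = Suc m"
    by (cases n) auto
  have "int (F n) * cobweb_mu F n = (-1) ^ n * int (F n) * (\<Prod>k=1..n-1. int (F k) - 1)"
    using n prod_one_minus[of F m] by simp
  then show "cobweb_char_poly F n = [:0, 1:] * cobweb_char_poly F (n - 1)
      + [: (-1) ^ n * int (F n) * (\<Prod>k=1..n-1. int (F k) - 1) :]"
    using sum_monom_diff_Suc[of "\<lambda>t. int (F t) * cobweb_mu F t" m] n
    by (simp add: by_level)
qed

end
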